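(* Let $K$ and $L$ be fields, let $\overline{L}$ be an algebraic closure of $L$, and let $q\colon K\to L$ be a multiplicative quadratic map. Then there exist field monomorphisms $\varphi_1,\varphi_2\colon K\to\overline{L}$ such that $q(a)=\varphi_1(a)\,\varphi_2(a)$ for all $a\in K$.
   Context: Let $K,L$ be rings with identity. A map $q\colon K\to L$ is called a multiplicative quadratic map if (i) $q(ab)=q(a)q(b)$ for all $a,b\in K$; (ii) $q(n\cdot 1_K)=n^2\cdot 1_L$ for all $n\in\mathbb{Z}$; (iii) the map $f\colon K\times K\to L$, $f(a,b)=q(a+b)-q(a)-q(b)$, is biadditive. *)

theory Defs
  imports "HOL-Algebra.Algebraic_Closure_Type"
begin

definition mult_quadratic_map :: "('k::ring_1 \<Rightarrow> 'l::ring_1) \<Rightarrow> bool" where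
  "mult_quadratic_map q \<longleftrightarrow>
     (\<forall>a b. q (a * b) = q a * q b) \<and>
     (\<forall>n::int. q (of_int n) = of_int (n ^ 2)) \<and>
     (let f = (\<lambda>a b. q (a + b) - q a - q b) in
        (\<forall>a b c. f (a + b) c = f a c + f b c) \<and>
        (\<forall>a b c. f a (b + c) = f a b + f a c))"

definition field_monomorphism :: "('k::field \<Rightarrow> 'l::field) \<Rightarrow> bool" where
  "field_monomorphism \<phi> \<longleftrightarrow>
     (\<forall>a b. \<phi> (a + b) = \<phi> a + \<phi> b) \<and>
     (\<forall>a b. \<phi> (a * b) = \<phi> a * \<phi> b) \<and>
     \<phi> 1 = 1 \<and> inj \<phi>"

end

theory Submission
  imports Defs
begin

text \<open>Let f be the polarization of q and t a = f a 1. If q = \<phi>1 \<phi>2 with ring homomorphisms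
  \<phi>1, \<phi>2, then t = \<phi>1 + \<phi>2, so \<phi>1 a is a root of X^2 - t a X + q a. Conversely, if some ring
  homomorphism \<phi> picks such a root for every a, then t - \<phi> is a ring homomorphism as well and
  q = \<phi> (t - \<phi>). Expanding q((a + b)(c + d)) = q(a + b) q(c + d) gives polynomial identities
  between q, f and t. If the discriminant t^2 - 4 q vanishes identically, every root is double and
  the unique root is a homomorphism. Otherwise fix \<theta> with nonzero discriminant and a root \<rho> of
  its polynomial; then \<phi> a = (t a \<rho> - f a \<theta>) / (2 \<rho> - t \<theta>) is the homomorphism: for
  q = \<phi>1 \<phi>2 and \<rho> = \<phi>1 \<theta> the numerator is \<phi>1 a (\<phi>1 \<theta> - \<phi>2 \<theta>).\<close>

definition polar :: "('a::ab_group_add \<Rightarrow> 'b::ab_group_add) \<Rightarrow> 'a \<Rightarrow> 'a \<Rightarrow> 'b" where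
  "polar q a b = q (a + b) - q a - q b"

definition unital_ring_hom :: "('a::ring_1 \<Rightarrow> 'b::ring_1) \<Rightarrow> bool" where
  "unital_ring_hom \<phi> \<longleftrightarrow>
     (\<forall>a b. \<phi> (a + b) = \<phi> a + \<phi> b) \<and> (\<forall>a b. \<phi> (a * b) = \<phi> a * \<phi> b) \<and> \<phi> 1 = 1"

lemma unital_ring_hom_to_ac: "unital_ring_hom to_ac"
  by (simp add: unital_ring_hom_def)

lemma unital_ring_hom_diff:
  assumes "unital_ring_hom h"
  shows "h (a - b) = h a - h b"
proof -
  have "h a = h (a - b) + h b"
    using assms unfolding unital_ring_hom_def by (metis diff_add_cancel)
  then show ?thesis by simp
qed

lemma unital_ring_hom_of_int:
  assumes h: "unital_ring_hom h"
  shows "h (of_int n) = of_int n"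
proof -
  have of_nat: "h (of_nat m) = of_nat m" for m
    using h unital_ring_hom_diff[OF h, of 0 0] by (induction m) (simp_all add: unital_ring_hom_def)
  show ?thesis
  proof (cases n rule: int_cases)
    case (neg m)
    then show ?thesis
      using unital_ring_hom_diff[OF h, of 0 "of_nat (Suc m)"] of_nat[of 0] of_nat[of "Suc m"] by simp
  qed (simp add: of_nat)
qed

lemma mult_quadratic_map_comp:
  assumes h: "unital_ring_hom h" and q: "mult_quadratic_map q"
  shows "mult_quadratic_map (\<lambda>a. h (q a))"
proof -
  have add: "h (x + y) = h x + h y" and mult: "h (x * y) = h x * h y" for x y
    using h by (simp_all add: unital_ring_hom_def)
  note diff = unital_ring_hom_diff[OF h]
  have q_mult: "\<forall>a b. q (a * b) = q a * q b"
    and q_of_int: "\<forall>n::int. q (of_int n) = of_int (n ^ 2)"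
    and left: "\<forall>a b c. q (a + b + c) - q (a + b) - q c = (q (a + c) - q a - q c) + (q (b + c) - q b - q c)"
    and right: "\<forall>a b c. q (a + (b + c)) - q a - q (b + c) = (q (a + b) - q a - q b) + (q (a + c) - q a - q c)"
    using q unfolding mult_quadratic_map_def Let_def by blast+
  show ?thesis
    unfolding mult_quadratic_map_def Let_def
  proof (intro conjI allI)
    fix a b c
    show "h (q (a * b)) = h (q a) * h (q b)"
      using q_mult by (simp add: mult)
    show "h (q (a + b + c)) - h (q (a + b)) - h (q c) =
        h (q (a + c)) - h (q a) - h (q c) + (h (q (b + c)) - h (q b) - h (q c))"
      by (simp only: left flip: diff add)
    show "h (q (a + (b + c))) - h (q a) - h (q (b + c)) =
        h (q (a + b)) - h (q a) - h (q b) + (h (q (a + c)) - h (q a) - h (q c))"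
      by (simp only: right flip: diff add)
  next
    fix n :: int
    show "h (q (of_int n)) = of_int (n ^ 2)"
      using q_of_int unital_ring_hom_of_int[OF h, of "n ^ 2"] by simp
  qed
qed

lemma field_monomorphism_iff_unital_ring_hom:
  fixes \<phi> :: "'k::field \<Rightarrow> 'm::field"
  shows "field_monomorphism \<phi> \<longleftrightarrow> unital_ring_hom \<phi>"
proof
  assume hom: "unital_ring_hom \<phi>"
  have "\<phi> a \<noteq> 0" if "a \<noteq> 0" for a
  proof
    assume "\<phi> a = 0"
    then have "\<phi> (a * inverse a) = 0" using hom by (simp add: unital_ring_hom_def)
    with \<open>a \<noteq> 0\<close> hom show False by (simp add: unital_ring_hom_def)
  qed
  then have "inj \<phi>"
    by (metis injI eq_iff_diff_eq_0 unital_ring_hom_diff[OF hom])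
  with hom show "field_monomorphism \<phi>"
    by (simp add: field_monomorphism_def unital_ring_hom_def)
qed (simp add: field_monomorphism_def unital_ring_hom_def)

lemma quadratic_root_unique:
  fixes r s b c :: "'a::field"
  assumes r: "r\<^sup>2 - b * r + c = 0" and s: "s\<^sup>2 - b * s + c = 0" and disc: "b\<^sup>2 = 4 * c"
  shows "r = s"
proof -
  have "(r - s) * (r + s - b) = (r\<^sup>2 - b * r + c) - (s\<^sup>2 - b * s + c)"
    by (simp add: algebra_simps power2_eq_square)
  then have "(r - s) * (r + s - b) = 0"
    using r s by simp
  show "r = s"
  proof (rule ccontr)
    assume "r \<noteq> s"
    with \<open>(r - s) * (r + s - b) = 0\<close> have "r + s - b = 0" by simp
    then have "s = b - r" by (simp add: algebra_simps)
    moreover have "(r - (b - r))\<^sup>2 = (b\<^sup>2 - 4 * c) + 4 * (r\<^sup>2 - b * r + c)"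
      by (simp add: algebra_simps power2_eq_square)
    ultimately have "(r - s)\<^sup>2 = 0"
      using r disc by simp
    with \<open>r \<noteq> s\<close> show False by simp
  qed
qed

lemma alg_closed_quadratic_root: "\<exists>r::'a::alg_closed_field. r\<^sup>2 - b * r + c = 0"
proof -
  obtain r where "poly [:c, -b, 1:] r = 0"
    using alg_closed_imp_poly_has_root[of "[:c, -b, 1:]"] by auto
  then have "r\<^sup>2 - b * r + c = 0"
    by (simp add: algebra_simps power2_eq_square)
  then show ?thesis ..
qed

locale mult_quadratic =
  fixes q :: "'k::comm_ring_1 \<Rightarrow> 'm::comm_ring_1"
  assumes mult_quadratic_map: "mult_quadratic_map q"
begin

abbreviation tr :: "'k \<Rightarrow> 'm" where
  "tr a \<equiv> polar q a 1"

lemma q_mult: "q (a * b) = q a * q b"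
  using mult_quadratic_map unfolding mult_quadratic_map_def by blast

lemma q_of_int: "q (of_int n) = of_int (n\<^sup>2)"
  using mult_quadratic_map unfolding mult_quadratic_map_def by blast

lemma q_1 [simp]: "q 1 = 1"
  using q_of_int[of 1] by simp

lemma polar_add_left: "polar q (a + b) c = polar q a c + polar q b c"
  using mult_quadratic_map unfolding mult_quadratic_map_def polar_def Let_def by blast

lemma polar_add_right: "polar q a (b + c) = polar q a b + polar q a c"
  using mult_quadratic_map unfolding mult_quadratic_map_def polar_def Let_def by blast

lemma polar_commute: "polar q a b = polar q b a"
  unfolding polar_def by (simp add: add.commute)

lemma q_add: "q (a + b) = q a + q b + polar q a b"
  unfolding polar_def by simp

lemma polar_self: "polar q a a = 2 * q a"
proof -
  have "q 2 = 4"
    using q_of_int[of 2] by simp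
  moreover have "q (a + a) = q 2 * q a"
    using q_mult[of 2 a] by (simp only: mult_2)
  ultimately show ?thesis
    unfolding polar_def by (simp add: algebra_simps)
qed

lemma polar_mult_mult: "polar q (c * a) (c * b) = q c * polar q a b"
proof -
  have "q (c * a + c * b) = q c * q (a + b)"
    using q_mult[of c "a + b"] by (simp add: distrib_left)
  then show ?thesis
    unfolding polar_def by (simp add: q_mult algebra_simps)
qed

lemma polar_mult_polar:
  "polar q a b * polar q c d = polar q (a * c) (b * d) + polar q (a * d) (b * c)"
proof -
  have "q (a * c + a * d + (b * c + b * d)) = q (a + b) * q (c + d)"
    using q_mult[of "a + b" "c + d"] by (simp add: algebra_simps)
  moreover have "polar q (a * c) (a * d) = q a * polar q c d"
    and "polar q (b * c) (b * d) = q b * polar q c d"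
    and "polar q (a * c) (b * c) = q c * polar q a b"
    and "polar q (a * d) (b * d) = q d * polar q a b"
    using polar_mult_mult[of a c d] polar_mult_mult[of b c d]
      polar_mult_mult[of c a b] polar_mult_mult[of d a b]
    by (simp_all add: mult.commute)
  ultimately show ?thesis
    by (simp add: q_add q_mult polar_add_left polar_add_right algebra_simps)
qed

lemma tr_1: "tr 1 = 2"
  using polar_self[of 1] by simp

lemma tr_mult: "tr (a * b) = tr a * tr b - polar q a b"
  using polar_mult_polar[of a 1 b 1] by (simp add: polar_commute)

lemma polar_quadratic_relation:
  "polar q a b * (tr a * tr b - polar q a b) = q a * (tr b)\<^sup>2 + q b * (tr a)\<^sup>2 - 4 * q a * q b"
proof -
  have "polar q a b * (tr a * tr b - polar q a b) = polar q a b * tr (a * b)"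
    by (simp add: tr_mult)
  also have "\<dots> = polar q (a * a * b) b + polar q (b * b * a) a"
    using polar_mult_polar[of a b "a * b" 1] by (simp add: polar_commute mult_ac)
  also have "\<dots> = q b * tr (a * a) + q a * tr (b * b)"
    using polar_mult_mult[of b "a * a" 1] polar_mult_mult[of a "b * b" 1] by (simp add: mult_ac)
  finally show ?thesis
    by (simp add: tr_mult polar_self power2_eq_square algebra_simps)
qed

lemma tr_polar_mult:
  "2 * polar q (a * b) c + tr c * polar q a b = tr a * polar q b c + tr b * polar q a c"
  using polar_mult_polar[of a 1 b c] polar_mult_polar[of b 1 a c] polar_mult_polar[of a b c 1]
  by (simp add: polar_commute[of a "b * c"] mult.commute algebra_simps)

lemma polar_mult_polar_same:
  "polar q a c * polar q b c = tr c * polar q (a * b) c - 2 * q c * tr (a * b) + tr a * tr b * q c"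
proof -
  have "polar q (a * b) c * tr c = polar q (a * b) (c * c) + q c * tr (a * b)"
    using polar_mult_polar[of "a * b" c 1 c] polar_mult_mult[of c "a * b" 1]
    by (simp add: polar_commute[of 1 c] mult_ac)
  moreover have "polar q a c * polar q b c = polar q (a * b) (c * c) + q c * polar q a b"
    using polar_mult_polar[of a c b c] polar_mult_mult[of c a b] by (simp add: mult_ac)
  ultimately show ?thesis
    by (simp add: tr_mult algebra_simps)
qed

lemma root_numerator_root:
  assumes \<rho>: "\<rho>\<^sup>2 - tr \<theta> * \<rho> + q \<theta> = 0"
  defines "P \<equiv> \<lambda>a. tr a * \<rho> - polar q a \<theta>" and "D \<equiv> 2 * \<rho> - tr \<theta>"
  shows "(P a)\<^sup>2 - tr a * P a * D + q a * D\<^sup>2 = 0"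
proof -
  have "(P a)\<^sup>2 - tr a * P a * D + q a * D\<^sup>2 = (4 * q a - (tr a)\<^sup>2) * (\<rho>\<^sup>2 - tr \<theta> * \<rho> + q \<theta>)
      - (polar q a \<theta> * (tr a * tr \<theta> - polar q a \<theta>)
         - (q a * (tr \<theta>)\<^sup>2 + q \<theta> * (tr a)\<^sup>2 - 4 * q a * q \<theta>))"
    unfolding P_def D_def by (simp add: algebra_simps power2_eq_square)
  also have "\<dots> = 0"
    using \<rho> polar_quadratic_relation[of a \<theta>] by simp
  finally show ?thesis .
qed

lemma root_numerator_mult:
  assumes \<rho>: "\<rho>\<^sup>2 - tr \<theta> * \<rho> + q \<theta> = 0"
  defines "P \<equiv> \<lambda>a. tr a * \<rho> - polar q a \<theta>" and "D \<equiv> 2 * \<rho> - tr \<theta>"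
  shows "P (a * b) * D = P a * P b"
proof -
  have tr_polar: "tr \<theta> * tr (a * b) - 2 * polar q (a * b) \<theta>
      = tr a * tr b * tr \<theta> - tr a * polar q b \<theta> - tr b * polar q a \<theta>"
    using tr_polar_mult[of a b \<theta>] unfolding tr_mult by (simp add: algebra_simps)
  have "P (a * b) * D - P a * P b = (2 * tr (a * b) - tr a * tr b) * (\<rho>\<^sup>2 - tr \<theta> * \<rho> + q \<theta>)
      + \<rho> * ((tr \<theta> * tr (a * b) - 2 * polar q (a * b) \<theta>)
               - (tr a * tr b * tr \<theta> - tr a * polar q b \<theta> - tr b * polar q a \<theta>))
      + ((tr \<theta> * polar q (a * b) \<theta> - 2 * q \<theta> * tr (a * b) + tr a * tr b * q \<theta>)
         - polar q a \<theta> * polar q b \<theta>)"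
    unfolding P_def D_def by (simp add: algebra_simps power2_eq_square)
  also have "\<dots> = 0"
    using \<rho> tr_polar polar_mult_polar_same[where c = \<theta>] by simp
  finally show ?thesis by simp
qed

lemma polar_eq_of_root_hom:
  assumes add: "\<And>a b. \<phi> (a + b) = \<phi> a + \<phi> b"
    and root: "\<And>a. (\<phi> a)\<^sup>2 - tr a * \<phi> a + q a = 0"
  shows "polar q a b = tr a * \<phi> b + tr b * \<phi> a - 2 * \<phi> a * \<phi> b"
proof -
  have "(\<phi> a + \<phi> b)\<^sup>2 - (tr a + tr b) * (\<phi> a + \<phi> b) + (q a + q b + polar q a b) = 0"
    using root[of "a + b"] by (simp add: add polar_add_left q_add)
  moreover have "polar q a b - (tr a * \<phi> b + tr b * \<phi> a - 2 * \<phi> a * \<phi> b) =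
      ((\<phi> a + \<phi> b)\<^sup>2 - (tr a + tr b) * (\<phi> a + \<phi> b) + (q a + q b + polar q a b))
      - ((\<phi> a)\<^sup>2 - tr a * \<phi> a + q a) - ((\<phi> b)\<^sup>2 - tr b * \<phi> b + q b)"
    by (simp add: algebra_simps power2_eq_square)
  ultimately show ?thesis
    using root[of a] root[of b] by simp
qed

lemma unital_ring_hom_conjugate:
  assumes hom: "unital_ring_hom \<phi>"
    and root: "\<And>a. (\<phi> a)\<^sup>2 - tr a * \<phi> a + q a = 0"
  shows "unital_ring_hom (\<lambda>a. tr a - \<phi> a)"
    and "q a = \<phi> a * (tr a - \<phi> a)"
proof -
  have add: "\<phi> (a + b) = \<phi> a + \<phi> b" and mult: "\<phi> (a * b) = \<phi> a * \<phi> b" and one: "\<phi> 1 = 1" for a b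
    using hom by (simp_all add: unital_ring_hom_def)
  have "tr (a * b) - \<phi> (a * b) = (tr a - \<phi> a) * (tr b - \<phi> b)" for a b
    using polar_eq_of_root_hom[OF add root, of a b] by (simp add: tr_mult mult algebra_simps)
  then show "unital_ring_hom (\<lambda>a. tr a - \<phi> a)"
    by (simp add: unital_ring_hom_def add polar_add_left tr_1 one)
  show "q a = \<phi> a * (tr a - \<phi> a)"
    using root[of a] by (simp add: algebra_simps power2_eq_square)
qed

end

locale mult_quadratic_alg_closed = mult_quadratic q for q :: "'k::comm_ring_1 \<Rightarrow> 'm::alg_closed_field"
begin

lemma exists_root_hom_degenerate:
  assumes disc: "\<And>a. (tr a)\<^sup>2 = 4 * q a"
  shows "\<exists>\<phi>. unital_ring_hom \<phi> \<and> (\<forall>a. (\<phi> a)\<^sup>2 - tr a * \<phi> a + q a = 0)"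
proof -
  define \<phi> where "\<phi> a = (SOME r. r\<^sup>2 - tr a * r + q a = 0)" for a
  have root: "(\<phi> a)\<^sup>2 - tr a * \<phi> a + q a = 0" for a
    unfolding \<phi>_def by (rule someI_ex[OF alg_closed_quadratic_root])
  have root_unique: "r\<^sup>2 - tr a * r + q a = 0 \<Longrightarrow> \<phi> a = r" for a r
    using quadratic_root_unique[OF root _ disc] by blast
  have tr_eq: "tr a = 2 * \<phi> a" for a
  proof -
    have "(2 * \<phi> a - tr a)\<^sup>2 = 4 * ((\<phi> a)\<^sup>2 - tr a * \<phi> a + q a) + ((tr a)\<^sup>2 - 4 * q a)"
      by (simp add: algebra_simps power2_eq_square)
    then show ?thesis using root[of a] disc[of a] by simp
  qed
  have q_eq: "q a = (\<phi> a)\<^sup>2" for a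
    using root[of a] by (simp add: tr_eq algebra_simps power2_eq_square)
  have polar_eq: "polar q a b = 2 * \<phi> a * \<phi> b" for a b
  proof -
    have "polar q a b * (2 * \<phi> a * (2 * \<phi> b) - polar q a b) = 4 * (\<phi> a)\<^sup>2 * (\<phi> b)\<^sup>2"
      using polar_quadratic_relation[of a b] unfolding tr_eq q_eq[of a] q_eq[of b]
      by (simp add: algebra_simps power2_eq_square)
    moreover have "(polar q a b - 2 * \<phi> a * \<phi> b)\<^sup>2 =
        4 * (\<phi> a)\<^sup>2 * (\<phi> b)\<^sup>2 - polar q a b * (2 * \<phi> a * (2 * \<phi> b) - polar q a b)"
      by (simp add: algebra_simps power2_eq_square)
    ultimately show ?thesis by simp
  qed
  have "unital_ring_hom \<phi>"
    unfolding unital_ring_hom_def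
  proof (intro conjI allI)
    fix a b
    show "\<phi> (a + b) = \<phi> a + \<phi> b"
      by (rule root_unique, unfold polar_add_left q_add)
        (simp add: polar_eq[of a b] q_eq tr_eq algebra_simps power2_eq_square)
    show "\<phi> (a * b) = \<phi> a * \<phi> b"
      by (rule root_unique, unfold tr_mult q_mult)
        (simp add: polar_eq[of a b] q_eq tr_eq algebra_simps power2_eq_square)
    show "\<phi> 1 = 1"
      by (rule root_unique) (simp add: tr_1)
  qed
  with root show ?thesis by blast
qed

lemma exists_root_hom_nondegenerate:
  assumes disc: "(tr \<theta>)\<^sup>2 \<noteq> 4 * q \<theta>"
  shows "\<exists>\<phi>. unital_ring_hom \<phi> \<and> (\<forall>a. (\<phi> a)\<^sup>2 - tr a * \<phi> a + q a = 0)"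
proof -
  obtain \<rho> where \<rho>: "\<rho>\<^sup>2 - tr \<theta> * \<rho> + q \<theta> = 0"
    using alg_closed_quadratic_root by blast
  define D where "D = 2 * \<rho> - tr \<theta>"
  have "D\<^sup>2 = (tr \<theta>)\<^sup>2 - 4 * q \<theta> + 4 * (\<rho>\<^sup>2 - tr \<theta> * \<rho> + q \<theta>)"
    unfolding D_def by (simp add: algebra_simps power2_eq_square)
  with \<rho> disc have "D \<noteq> 0" by auto
  define P where "P a = tr a * \<rho> - polar q a \<theta>" for a
  define \<phi> where "\<phi> a = P a / D" for a
  have P: "P a = \<phi> a * D" for a
    unfolding \<phi>_def using \<open>D \<noteq> 0\<close> by simp
  have root: "(\<phi> a)\<^sup>2 - tr a * \<phi> a + q a = 0" for a
  proof -
    have "((\<phi> a)\<^sup>2 - tr a * \<phi> a + q a) * D\<^sup>2 = (P a)\<^sup>2 - tr a * P a * D + q a * D\<^sup>2"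
      unfolding P by (simp add: algebra_simps power2_eq_square)
    with root_numerator_root[OF \<rho>, of a] \<open>D \<noteq> 0\<close> show ?thesis
      unfolding P_def D_def by simp
  qed
  have "unital_ring_hom \<phi>"
    unfolding unital_ring_hom_def
  proof (intro conjI allI)
    fix a b
    show "\<phi> (a + b) = \<phi> a + \<phi> b"
      unfolding \<phi>_def P_def polar_add_left add_divide_distrib[symmetric] by (simp add: algebra_simps)
    have "(\<phi> (a * b) - \<phi> a * \<phi> b) * D\<^sup>2 = P (a * b) * D - P a * P b"
      unfolding P by (simp add: algebra_simps power2_eq_square)
    with root_numerator_mult[OF \<rho>, of a b] \<open>D \<noteq> 0\<close> show "\<phi> (a * b) = \<phi> a * \<phi> b"
      unfolding P_def D_def by simp
    show "\<phi> 1 = 1"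
      using \<open>D \<noteq> 0\<close> unfolding \<phi>_def P_def D_def by (simp add: tr_1 polar_commute[of 1 \<theta>])
  qed
  with root show ?thesis by blast
qed

lemma exists_root_hom: "\<exists>\<phi>. unital_ring_hom \<phi> \<and> (\<forall>a. (\<phi> a)\<^sup>2 - tr a * \<phi> a + q a = 0)"
  using exists_root_hom_degenerate exists_root_hom_nondegenerate by blast

end

theorem corollary1p3:
  fixes q :: "'k::field \<Rightarrow> 'l::field"
  assumes "mult_quadratic_map q"
  shows "\<exists>\<phi>1 \<phi>2 :: 'k \<Rightarrow> 'l alg_closure.
           field_monomorphism \<phi>1 \<and> field_monomorphism \<phi>2 \<and>
           (\<forall>a. to_ac (q a) = \<phi>1 a * \<phi>2 a)"
proof -
  interpret mult_quadratic_alg_closed "\<lambda>a. to_ac (q a)"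
    by unfold_locales (rule mult_quadratic_map_comp[OF unital_ring_hom_to_ac assms])
  obtain \<phi> where hom: "unital_ring_hom \<phi>"
    and root: "\<And>a. (\<phi> a)\<^sup>2 - tr a * \<phi> a + to_ac (q a) = 0"
    using exists_root_hom by blast
  show ?thesis
    using hom unital_ring_hom_conjugate[OF hom root]
    unfolding field_monomorphism_iff_unital_ring_hom by blast
qed

end
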